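(* For $N\in\mathbb{N}$, let $\pi_N$ be the law of the number of fixed points of a uniformly random permutation of $\{1,\dots,N\}$, and let $\mathcal{P}$ be the Poisson law on $\mathbb{Z}_+=\{0,1,2,\dots\}$ with parameter $1$. Then $$\lim_{N\to\infty}\frac{1}{N\ln N}\,\ln\big(\|\pi_N-\mathcal{P}\|_{\mathrm{tv}}\big)=-1 .$$
   Context: For probability measures $\mu,\mu'$ on $\mathbb{Z}_+$, $\|\mu-\mu'\|_{\mathrm{tv}}=\sup_{A\subset\mathbb{Z}_+}|\mu(A)-\mu'(A)|=\sum_{n}(\mu(n)-\mu'(n))_+$. *)

theory Defs
  imports "HOL-Probability.Probability"
begin

definition tv_dist :: "nat pmf \<Rightarrow> nat pmf \<Rightarrow> real" where
  "tv_dist p q = (SUP A. \<bar>measure_pmf.prob p A - measure_pmf.prob q A\<bar>)"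

definition fixpt_law :: "nat \<Rightarrow> nat pmf" where
  "fixpt_law N = map_pmf (\<lambda>\<sigma>. card {i \<in> {1..N}. \<sigma> i = i})
                   (pmf_of_set {\<sigma>. \<sigma> permutes {1..N}})"

end

theory Submission
  imports Defs "HOL-Real_Asymp.Real_Asymp"
begin

text \<open>Counting pairs \<open>(\<sigma>, T)\<close> with \<open>T\<close> a \<open>j\<close>-set of fixed points of \<open>\<sigma>\<close> shows that the
  factorial moments of the number of fixed points agree with those of Poisson(1), namely \<open>1\<close>,
  up to order \<open>N\<close>. Binomial inversion then gives \<open>\<pi>_N(k) = (1/k!) \<Sum>_{i \<le> N-k} (-1)^i/i!\<close>,
  so \<open>\<pi>_N(k) - e^{-1}/k!\<close> is \<open>1/k!\<close> times a Taylor remainder of \<open>e^{-1}\<close>, of size at most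
  \<open>3/(k! (N+1-k)!)\<close>. Summing over \<open>k \<le> N\<close> and adding the Poisson tail beyond \<open>N\<close> bounds the
  distance by \<open>4 \<cdot> 2^{N+1}/(N+1)!\<close>. Conversely \<open>\<pi>_N\<close> vanishes beyond \<open>N\<close>, so the distance is
  at least the Poisson mass \<open>e^{-1}/(N+1)!\<close> at \<open>N+1\<close>. Both bounds are \<open>e^{O(N)}/(N+1)!\<close>, and
  \<open>ln (N+1)! = N ln N + O(N)\<close>.\<close>

definition fixed_points :: "'a set \<Rightarrow> ('a \<Rightarrow> 'a) \<Rightarrow> 'a set" where
  "fixed_points A \<sigma> = {i \<in> A. \<sigma> i = i}"

lemma fixed_points_subset: "fixed_points A \<sigma> \<subseteq> A"
  unfolding fixed_points_def by blast

lemma permutes_fixing_iff_permutes_Diff: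
  assumes "T \<subseteq> A"
  shows "\<sigma> permutes A \<and> T \<subseteq> fixed_points A \<sigma> \<longleftrightarrow> \<sigma> permutes (A - T)"
proof
  assume "\<sigma> permutes A \<and> T \<subseteq> fixed_points A \<sigma>"
  then show "\<sigma> permutes (A - T)"
    unfolding permutes_def fixed_points_def by auto
next
  assume \<sigma>: "\<sigma> permutes (A - T)"
  then have "\<sigma> permutes A" by (rule permutes_subset) blast
  moreover have "T \<subseteq> fixed_points A \<sigma>"
    using \<sigma> assms unfolding permutes_def fixed_points_def by auto
  ultimately show "\<sigma> permutes A \<and> T \<subseteq> fixed_points A \<sigma>" ..
qed

lemma card_permutes_fixing:
  assumes "finite A" "T \<subseteq> A"
  shows "card {\<sigma>. \<sigma> permutes A \<and> T \<subseteq> fixed_points A \<sigma>} = fact (card A - card T)"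
proof -
  have "finite T" by (rule finite_subset[OF assms(2,1)])
  then have "card (A - T) = card A - card T" using assms by (simp add: card_Diff_subset)
  then show ?thesis
    using assms by (simp add: permutes_fixing_iff_permutes_Diff card_permutations)
qed

lemma sum_permutes_card_fixed_points_choose:
  assumes "finite A"
  shows "(\<Sum>\<sigma> | \<sigma> permutes A. card (fixed_points A \<sigma>) choose j)
           = (card A choose j) * fact (card A - j)"
proof -
  let ?P = "{\<sigma>. \<sigma> permutes A}" and ?S = "{T. T \<subseteq> A \<and> card T = j}"
  have fin: "finite ?P" "finite ?S" using assms by (simp_all add: finite_permutations)
  have "card (fixed_points A \<sigma>) choose j = card (?S \<inter> {T. T \<subseteq> fixed_points A \<sigma>})" for \<sigma>
  proof -
    have "finite (fixed_points A \<sigma>)" by (rule finite_subset[OF fixed_points_subset assms])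
    then have "card (fixed_points A \<sigma>) choose j = card {T. T \<subseteq> fixed_points A \<sigma> \<and> card T = j}"
      by (rule n_subsets[symmetric])
    also have "{T. T \<subseteq> fixed_points A \<sigma> \<and> card T = j} = ?S \<inter> {T. T \<subseteq> fixed_points A \<sigma>}"
      using fixed_points_subset[of A \<sigma>] by blast
    finally show ?thesis .
  qed
  then have "(\<Sum>\<sigma>\<in>?P. card (fixed_points A \<sigma>) choose j)
      = (\<Sum>\<sigma>\<in>?P. \<Sum>T\<in>?S. of_bool (T \<subseteq> fixed_points A \<sigma>))"
    using fin by simp
  also have "\<dots> = (\<Sum>T\<in>?S. \<Sum>\<sigma>\<in>?P. of_bool (T \<subseteq> fixed_points A \<sigma>))"
    by (rule sum.swap)
  also have "\<dots> = (\<Sum>T\<in>?S. fact (card A - j))"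
  proof (rule sum.cong[OF refl])
    fix T assume "T \<in> ?S"
    have "?P \<inter> {\<sigma>. T \<subseteq> fixed_points A \<sigma>} = {\<sigma>. \<sigma> permutes A \<and> T \<subseteq> fixed_points A \<sigma>}"
      by blast
    then show "(\<Sum>\<sigma>\<in>?P. of_bool (T \<subseteq> fixed_points A \<sigma>)) = fact (card A - j)"
      using card_permutes_fixing[OF assms] \<open>T \<in> ?S\<close> fin by simp
  qed
  also have "\<dots> = (card A choose j) * fact (card A - j)"
    using assms by (simp add: n_subsets)
  finally show ?thesis .
qed

lemma alternating_sum_choose_choose:
  assumes "m \<le> N"
  shows "(\<Sum>j=k..N. (-1)^(j-k) * of_nat (j choose k) * of_nat (m choose j))
           = (of_bool (m = k) :: 'a::comm_ring_1)"
proof (cases "k \<le> m")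
  case False
  then show ?thesis by (auto intro!: sum.neutral simp: binomial_eq_0)
next
  case True
  have "(\<Sum>j=k..N. (-1)^(j-k) * of_nat (j choose k) * of_nat (m choose j))
      = (\<Sum>j=k..m. (-1)^(j-k) * of_nat (j choose k) * (of_nat (m choose j) :: 'a))"
    using assms by (intro sum.mono_neutral_right) (auto simp: binomial_eq_0)
  also have "\<dots> = (\<Sum>j=k..m. (-1)^(j-k) * of_nat (m choose k) * of_nat ((m - k) choose (j - k)))"
  proof (rule sum.cong[OF refl])
    fix j assume "j \<in> {k..m}"
    then have "(m choose j) * (j choose k) = (m choose k) * ((m - k) choose (j - k))"
      by (intro choose_mult) auto
    then show "(-1)^(j-k) * of_nat (j choose k) * of_nat (m choose j)
        = (-1)^(j-k) * of_nat (m choose k) * (of_nat ((m - k) choose (j - k)) :: 'a)"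
      by (metis (no_types, lifting) mult.assoc mult.commute of_nat_mult)
  qed
  also have "\<dots> = of_nat (m choose k) * (\<Sum>i\<le>m-k. (-1)^i * of_nat ((m - k) choose i))"
    using True sum.shift_bounds_cl_nat_ivl[of
        "\<lambda>j. (-1)^(j-k) * of_nat (m choose k) * (of_nat ((m - k) choose (j - k)) :: 'a)" 0 k "m-k"]
    by (simp add: sum_distrib_left atLeast0AtMost mult_ac)
  also have "\<dots> = of_bool (m = k)"
    using choose_alternating_sum[of "m - k", where 'a='a] True by (cases "m = k") auto
  finally show ?thesis .
qed

lemma fixpt_law_altdef:
  "fixpt_law N = map_pmf (\<lambda>\<sigma>. card (fixed_points {1..N} \<sigma>)) (pmf_of_set {\<sigma>. \<sigma> permutes {1..N}})"
  unfolding fixpt_law_def fixed_points_def ..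

lemma set_pmf_fixpt_law: "set_pmf (fixpt_law N) \<subseteq> {..N}"
proof -
  have ne: "{\<sigma>. \<sigma> permutes {1..N}} \<noteq> {}" and fin: "finite {\<sigma>. \<sigma> permutes {1..N}}"
    using permutes_id[of "{1..N}"] by (blast, simp add: finite_permutations)
  have "card (fixed_points {1..N} \<sigma>) \<le> N" for \<sigma>
    using card_mono[OF _ fixed_points_subset, of "{1..N}"] by simp
  then show ?thesis
    unfolding fixpt_law_altdef set_map_pmf set_pmf_of_set[OF ne fin] by auto
qed

lemma pmf_fixpt_law_sum:
  "pmf (fixpt_law N) k = (\<Sum>j=k..N. (-1)^(j-k) * real (j choose k) / fact j)"
proof -
  let ?P = "{\<sigma>. \<sigma> permutes {1..N}}" and ?X = "\<lambda>\<sigma>. card (fixed_points {1..N} \<sigma>)"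
  have P: "finite ?P" "?P \<noteq> {}" "card ?P = fact N"
    using permutes_id[of "{1..N}"] by (simp add: finite_permutations, blast, simp add: card_permutations)
  have X: "?X \<sigma> \<le> N" for \<sigma>
    using card_mono[OF _ fixed_points_subset, of "{1..N}"] by simp
  have "pmf (fixpt_law N) k = (\<Sum>\<sigma>\<in>?P. of_bool (?X \<sigma> = k)) / fact N"
    using P by (simp add: fixpt_law_altdef pmf_map measure_pmf_of_set sum.inter_filter Int_def vimage_def)
  also have "(\<Sum>\<sigma>\<in>?P. of_bool (?X \<sigma> = k))
      = (\<Sum>\<sigma>\<in>?P. \<Sum>j=k..N. (-1)^(j-k) * real (j choose k) * real (?X \<sigma> choose j))"
    by (intro sum.cong refl) (rule alternating_sum_choose_choose[OF X, symmetric])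
  also have "\<dots> = (\<Sum>j=k..N. (-1)^(j-k) * real (j choose k) * (\<Sum>\<sigma>\<in>?P. real (?X \<sigma> choose j)))"
    unfolding sum_distrib_left by (rule sum.swap)
  also have "\<dots> = (\<Sum>j=k..N. (-1)^(j-k) * real (j choose k) * (fact N / fact j))"
  proof (rule sum.cong[OF refl])
    fix j assume "j \<in> {k..N}"
    then have "(\<Sum>\<sigma>\<in>?P. real (?X \<sigma> choose j)) = real (N choose j) * fact (N - j)"
      using sum_permutes_card_fixed_points_choose[of "{1..N}" j]
      by (simp flip: of_nat_sum)
    also have "\<dots> = fact N / fact j"
      using \<open>j \<in> {k..N}\<close> by (simp add: binomial_fact)
    finally show "(-1)^(j-k) * real (j choose k) * (\<Sum>\<sigma>\<in>?P. real (?X \<sigma> choose j))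
        = (-1)^(j-k) * real (j choose k) * (fact N / fact j)" by simp
  qed
  finally show ?thesis by (simp add: sum_divide_distrib)
qed

lemma pmf_fixpt_law:
  assumes "k \<le> N"
  shows "pmf (fixpt_law N) k = (\<Sum>i<N-k+1. (-1)^i / fact i) / fact k"
proof -
  have "pmf (fixpt_law N) k = (\<Sum>i=0..N-k. (-1)^i * real ((i+k) choose k) / fact (i+k))"
    using sum.shift_bounds_cl_nat_ivl[of "\<lambda>j. (-1)^(j-k) * real (j choose k) / fact j" 0 k "N-k"] assms
    by (simp add: pmf_fixpt_law_sum)
  also have "\<dots> = (\<Sum>i=0..N-k. (-1)^i / fact i / fact k)"
    by (intro sum.cong refl) (simp add: binomial_fact field_simps)
  finally show ?thesis
    by (simp add: sum_divide_distrib atLeast0AtMost lessThan_Suc_atMost)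
qed

lemma prob_poisson_greaterThan_le:
  assumes "0 < r"
  shows "measure_pmf.prob (poisson_pmf r) {N<..} \<le> r ^ (N+1) / fact (N+1)"
proof -
  obtain t where t: "\<bar>t\<bar> \<le> \<bar>r\<bar>"
    and exp_r: "exp r = (\<Sum>k\<le>N. r ^ k / fact k) + exp t / fact (N+1) * r ^ (N+1)"
    using Maclaurin_exp_le[of r "N+1"] by (auto simp: lessThan_Suc_atMost)
  have "measure_pmf.prob (poisson_pmf r) {N<..} = 1 - measure_pmf.prob (poisson_pmf r) {..N}"
    using measure_pmf.prob_compl[of "{..N}" "poisson_pmf r"] by (simp add: Compl_eq_Diff_UNIV[symmetric])
  also have "measure_pmf.prob (poisson_pmf r) {..N} = exp (-r) * (\<Sum>k\<le>N. r ^ k / fact k)"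
    using assms by (simp add: measure_measure_pmf_finite pmf_poisson sum_distrib_left mult_ac)
  also have "1 - exp (-r) * (\<Sum>k\<le>N. r ^ k / fact k) = exp (-r) * (exp t / fact (N+1) * r ^ (N+1))"
  proof -
    have "(\<Sum>k\<le>N. r ^ k / fact k) = exp r - exp t / fact (N+1) * r ^ (N+1)"
      using exp_r by simp
    then show ?thesis
      by (simp add: right_diff_distrib flip: exp_add)
  qed
  also have "\<dots> = exp (t - r) * (r ^ (N+1) / fact (N+1))"
    by (simp add: exp_diff exp_minus field_simps)
  also have "\<dots> \<le> r ^ (N+1) / fact (N+1)"
    using t assms by (intro mult_left_le_one_le) auto
  finally show ?thesis .
qed

lemma abs_pmf_fixpt_law_diff_poisson_le:
  assumes "k \<le> N"
  shows "\<bar>pmf (fixpt_law N) k - pmf (poisson_pmf 1) k\<bar> \<le> 3 / (fact k * fact (N+1-k))"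
proof -
  obtain t :: real where t: "\<bar>t\<bar> \<le> 1"
    and exp_minus_1: "exp (-1) = (\<Sum>i<N-k+1. (-1)^i / fact i) + exp t / fact (N-k+1) * (-1)^(N-k+1)"
    using Maclaurin_exp_le[of "-1::real" "N-k+1"] by auto
  have "exp t \<le> 3"
    using t by (intro order_trans[OF _ exp_le]) simp
  have "\<bar>pmf (fixpt_law N) k - pmf (poisson_pmf 1) k\<bar> = exp t / (fact k * fact (N+1-k))"
    using assms by (simp add: pmf_fixpt_law pmf_poisson exp_minus_1 diff_divide_distrib[symmetric]
        abs_mult power_abs Suc_diff_le)
  also have "\<dots> \<le> 3 / (fact k * fact (N+1-k))"
    using \<open>exp t \<le> 3\<close> by (intro divide_right_mono) auto
  finally show ?thesis .
qed

lemma sum_abs_pmf_fixpt_law_diff_poisson_le: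
  "(\<Sum>k\<le>N. \<bar>pmf (fixpt_law N) k - pmf (poisson_pmf 1) k\<bar>) \<le> 3 * 2 ^ (N+1) / fact (N+1)"
proof -
  have "(\<Sum>k\<le>N. \<bar>pmf (fixpt_law N) k - pmf (poisson_pmf 1) k\<bar>)
      \<le> (\<Sum>k\<le>N. 3 / (fact k * fact (N+1-k)))"
    by (intro sum_mono abs_pmf_fixpt_law_diff_poisson_le) auto
  also have "\<dots> = 3 * (\<Sum>k\<le>N. real ((N+1) choose k)) / fact (N+1)"
    by (simp add: sum_distrib_left sum_divide_distrib binomial_fact)
  also have "\<dots> \<le> 3 * 2 ^ (N+1) / fact (N+1)"
  proof -
    have "(\<Sum>k\<le>N. (N+1) choose k) \<le> (\<Sum>k\<le>N+1. (N+1) choose k)"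
      by (intro sum_mono2) auto
    then have "(\<Sum>k\<le>N. real ((N+1) choose k)) \<le> 2 ^ (N+1)"
      unfolding choose_row_sum by (metis of_nat_le_iff of_nat_numeral of_nat_power of_nat_sum)
    then show ?thesis by (intro divide_right_mono) auto
  qed
  finally show ?thesis .
qed

lemma abs_prob_diff_le_tv_dist:
  "\<bar>measure_pmf.prob p A - measure_pmf.prob q A\<bar> \<le> tv_dist p q"
proof -
  have "\<bar>measure_pmf.prob p B - measure_pmf.prob q B\<bar> \<le> 1" for B
    by (smt (verit) measure_pmf.prob_le_1 measure_nonneg)
  then show ?thesis
    unfolding tv_dist_def by (intro cSUP_upper bdd_aboveI2) auto
qed

lemma tv_dist_le:
  assumes "\<And>A. \<bar>measure_pmf.prob p A - measure_pmf.prob q A\<bar> \<le> c"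
  shows "tv_dist p q \<le> c"
  unfolding tv_dist_def by (intro cSUP_least assms) auto

lemma abs_prob_diff_le_sum_abs_pmf_diff_plus_tail:
  fixes p q :: "nat pmf"
  assumes "set_pmf p \<subseteq> {..N}"
  shows "\<bar>measure_pmf.prob p A - measure_pmf.prob q A\<bar>
           \<le> (\<Sum>k\<le>N. \<bar>pmf p k - pmf q k\<bar>) + measure_pmf.prob q {N<..}"
proof -
  let ?A\<^sub>1 = "A \<inter> {..N}" and ?A\<^sub>2 = "A \<inter> {N<..}"
  have A: "A = ?A\<^sub>1 \<union> ?A\<^sub>2" "?A\<^sub>1 \<inter> ?A\<^sub>2 = {}" by auto
  have "measure_pmf.prob p ?A\<^sub>2 = 0"
    using assms by (subst measure_pmf_zero_iff) auto
  then have "measure_pmf.prob p A - measure_pmf.prob q A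
      = (measure_pmf.prob p ?A\<^sub>1 - measure_pmf.prob q ?A\<^sub>1) - measure_pmf.prob q ?A\<^sub>2"
    using measure_pmf.finite_measure_Union[OF _ _ A(2), of p] measure_pmf.finite_measure_Union[OF _ _ A(2), of q]
    by (simp flip: A(1))
  moreover have "\<bar>measure_pmf.prob p ?A\<^sub>1 - measure_pmf.prob q ?A\<^sub>1\<bar> \<le> (\<Sum>k\<le>N. \<bar>pmf p k - pmf q k\<bar>)"
  proof -
    have "\<bar>measure_pmf.prob p ?A\<^sub>1 - measure_pmf.prob q ?A\<^sub>1\<bar> = \<bar>\<Sum>k\<in>?A\<^sub>1. pmf p k - pmf q k\<bar>"
      by (simp add: measure_measure_pmf_finite sum_subtractf)
    also have "\<dots> \<le> (\<Sum>k\<in>?A\<^sub>1. \<bar>pmf p k - pmf q k\<bar>)" by (rule sum_abs)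
    also have "\<dots> \<le> (\<Sum>k\<le>N. \<bar>pmf p k - pmf q k\<bar>)" by (intro sum_mono2) auto
    finally show ?thesis .
  qed
  moreover have "0 \<le> measure_pmf.prob q ?A\<^sub>2" "measure_pmf.prob q ?A\<^sub>2 \<le> measure_pmf.prob q {N<..}"
    by (auto intro: measure_pmf.finite_measure_mono)
  ultimately show ?thesis by linarith
qed

lemma tv_dist_fixpt_law_poisson_bounds:
  "exp (-1) / fact (N+1) \<le> tv_dist (fixpt_law N) (poisson_pmf 1)"
  "tv_dist (fixpt_law N) (poisson_pmf 1) \<le> 4 * 2 ^ (N+1) / fact (N+1)"
proof -
  have "measure_pmf.prob (fixpt_law N) {N<..} = 0"
    using set_pmf_fixpt_law[of N] by (subst measure_pmf_zero_iff) auto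
  moreover have "exp (-1) / fact (N+1) \<le> measure_pmf.prob (poisson_pmf 1) {N<..}"
    using measure_pmf.finite_measure_mono[of "{N+1}" "{N<..}" "poisson_pmf 1"]
    by (simp add: measure_pmf_single pmf_poisson)
  ultimately show "exp (-1) / fact (N+1) \<le> tv_dist (fixpt_law N) (poisson_pmf 1)"
    using abs_prob_diff_le_tv_dist[of "fixpt_law N" "{N<..}" "poisson_pmf 1"] by simp
  show "tv_dist (fixpt_law N) (poisson_pmf 1) \<le> 4 * 2 ^ (N+1) / fact (N+1)"
  proof (rule tv_dist_le)
    fix A
    have "\<bar>measure_pmf.prob (fixpt_law N) A - measure_pmf.prob (poisson_pmf 1) A\<bar>
        \<le> (\<Sum>k\<le>N. \<bar>pmf (fixpt_law N) k - pmf (poisson_pmf 1) k\<bar>)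
          + measure_pmf.prob (poisson_pmf 1) {N<..}"
      by (rule abs_prob_diff_le_sum_abs_pmf_diff_plus_tail[OF set_pmf_fixpt_law])
    also have "\<dots> \<le> 3 * 2 ^ (N+1) / fact (N+1) + 1 / fact (N+1)"
      using sum_abs_pmf_fixpt_law_diff_poisson_le prob_poisson_greaterThan_le[of 1 N]
      by (intro add_mono) simp_all
    also have "\<dots> \<le> 4 * 2 ^ (N+1) / fact (N+1)"
      unfolding add_divide_distrib[symmetric]
      using one_le_power[of "2::real" "N+1"] by (intro divide_right_mono) auto
    finally show "\<bar>measure_pmf.prob (fixpt_law N) A - measure_pmf.prob (poisson_pmf 1) A\<bar>
        \<le> 4 * 2 ^ (N+1) / fact (N+1)" .
  qed
qed

lemma ln_fact_le: "ln (fact n) \<le> real n * ln (real n)"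
proof (cases "n = 0")
  case False
  have "ln (fact n) \<le> ln (real n ^ n)"
    using fact_le_power[of n, where 'a=real] by (intro ln_mono) auto
  also have "\<dots> = real n * ln (real n)"
    using False by (simp add: ln_realpow)
  finally show ?thesis .
qed simp

lemma ln_fact_ge: "real n * ln (real n) - real n \<le> ln (fact n)"
proof (cases "n = 0")
  case False
  obtain t where "exp (real n) = (\<Sum>m<n+1. real n ^ m / fact m) + exp t / fact (n+1) * real n ^ (n+1)"
    using Maclaurin_exp_le[of "real n" "n+1"] by blast
  moreover have "real n ^ n / fact n \<le> (\<Sum>m<n+1. real n ^ m / fact m)"
    by (rule member_le_sum) auto
  moreover have "0 \<le> exp t / fact (n+1) * real n ^ (n+1)"
    by simp
  ultimately have "real n ^ n / fact n \<le> exp (real n)"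
    by linarith
  then have "ln (real n ^ n / fact n) \<le> ln (exp (real n))"
    using False by (intro ln_mono) auto
  then show ?thesis
    using False by (simp add: ln_div ln_realpow)
qed simp

lemma ln_tv_dist_fixpt_law_poisson_bounds:
  "- 1 - real (N+1) * ln (real (N+1)) \<le> ln (tv_dist (fixpt_law N) (poisson_pmf 1))"
  "ln (tv_dist (fixpt_law N) (poisson_pmf 1))
     \<le> ln 4 + real (N+1) * ln 2 + real (N+1) - real (N+1) * ln (real (N+1))"
proof -
  let ?T = "tv_dist (fixpt_law N) (poisson_pmf 1)"
  have pos: "0 < exp (-1) / (fact (N+1) :: real)" by simp
  then have "0 < ?T"
    using tv_dist_fixpt_law_poisson_bounds(1) by (rule less_le_trans)
  have "- 1 - real (N+1) * ln (real (N+1)) \<le> ln (exp (-1) / fact (N+1))"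
    using ln_fact_le[of "N+1"] by (simp add: ln_div)
  also have "\<dots> \<le> ln ?T"
    using pos tv_dist_fixpt_law_poisson_bounds(1) by (intro ln_mono) auto
  finally show "- 1 - real (N+1) * ln (real (N+1)) \<le> ln ?T" .
  have "ln ?T \<le> ln (4 * 2 ^ (N+1) / fact (N+1))"
    using \<open>0 < ?T\<close> tv_dist_fixpt_law_poisson_bounds(2)[of N] by (intro ln_mono) auto
  also have "\<dots> = ln 4 + real (N+1) * ln 2 - ln (fact (N+1))"
    using ln_div[of "4 * 2 ^ (N+1)" "fact (N+1)"] ln_mult[of 4 "2 ^ (N+1)"] ln_realpow[of 2 "N+1"]
    by simp
  also have "\<dots> \<le> ln 4 + real (N+1) * ln 2 + real (N+1) - real (N+1) * ln (real (N+1))"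
    using ln_fact_ge[of "N+1"] by simp
  finally show "ln ?T \<le> ln 4 + real (N+1) * ln 2 + real (N+1) - real (N+1) * ln (real (N+1))" .
qed

theorem mainTheorem1:
  shows "((\<lambda>N::nat. ln (tv_dist (fixpt_law N) (poisson_pmf 1)) / (real N * ln (real N)))
           \<longlongrightarrow> -1) at_top"
proof (rule tendsto_sandwich)
  have pos: "\<forall>\<^sub>F N in at_top. 0 < real N * ln (real N)"
    by real_asymp
  then show "\<forall>\<^sub>F N in at_top. (- 1 - real (N+1) * ln (real (N+1))) / (real N * ln (real N))
                \<le> ln (tv_dist (fixpt_law N) (poisson_pmf 1)) / (real N * ln (real N))"
    by eventually_elim (rule divide_right_mono[OF ln_tv_dist_fixpt_law_poisson_bounds(1)], simp)
  from pos show "\<forall>\<^sub>F N in at_top. ln (tv_dist (fixpt_law N) (poisson_pmf 1)) / (real N * ln (real N))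
                \<le> (ln 4 + real (N+1) * ln 2 + real (N+1) - real (N+1) * ln (real (N+1)))
                    / (real N * ln (real N))"
    by eventually_elim (rule divide_right_mono[OF ln_tv_dist_fixpt_law_poisson_bounds(2)], simp)
  show "((\<lambda>N::nat. (- 1 - real (N+1) * ln (real (N+1))) / (real N * ln (real N))) \<longlongrightarrow> -1) at_top"
    and "((\<lambda>N::nat. (ln 4 + real (N+1) * ln 2 + real (N+1) - real (N+1) * ln (real (N+1)))
            / (real N * ln (real N))) \<longlongrightarrow> -1) at_top"
    by real_asymp+
qed

end
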